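(* Let $k\ge 1$ and $m_1,d_1,\dots,d_k$ be positive integers, let $\mathbf d=(m_1,d_1,\dots,d_k,1)$ and $\gamma>0$. For each pair of positive integers $(a,b)$ let $\|\cdot\|_*$ be a norm on $\mathbb{R}^{a\times b}$. Let $\mathcal{N}^{k,\mathbf d}_{\gamma_*\le\gamma}$ be the class of all functions $f:\mathbb{R}^{m_1}\to\mathbb{R}$ of the form $f=T_{k+1}\circ\sigma\circ T_k\circ\cdots\circ\sigma\circ T_1$, where $T_i:\mathbb{R}^{d_{i-1}}\to\mathbb{R}^{d_i}$ (with $d_0=m_1$, $d_{k+1}=1$) is given by $T_i(u)=\tilde V_i^T(1,u^T)^T$ for some $\tilde V_i\in\mathbb{R}^{(d_{i-1}+1)\times d_i}$, and $\gamma_*:=\prod_{i=1}^{k+1}\|\tilde V_i\|_*\le\gamma$. Then for every $n\ge1$ and every sample $S=\{x_1,\dots,x_n\}\subseteq\mathbb{R}^{m_1}$, $$\widehat{\mathfrak{R}}_S\big(\mathcal{N}^{k,\mathbf d}_{\gamma_*\le\gamma}\big)=\infty.$$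
   Context: $\sigma(u)=\max(u,0)$ for $u\in\mathbb{R}$, applied coordinatewise to vectors. For a class $\mathcal F$ of real-valued functions and a sample $S=\{x_1,\dots,x_n\}$, the empirical Rademacher complexity is $\widehat{\mathfrak{R}}_S(\mathcal F)=\mathbb{E}_\epsilon\big[\sup_{f\in\mathcal F}\frac1n\sum_{i=1}^n\epsilon_i f(x_i)\big]$, where $\epsilon_1,\dots,\epsilon_n$ are i.i.d. uniform on $\{-1,+1\}$. *)

theory Defs
  imports "HOL-Analysis.Analysis"
begin

text \<open>Vectors in R^a are functions nat => real vanishing outside {..<a};
  matrices in R^(a x b) are functions nat => nat => real vanishing outside {..<a} x {..<b}.\<close>

definition vecs :: "nat \<Rightarrow> (nat \<Rightarrow> real) set" where
  "vecs a = {u. \<forall>l. a \<le> l \<longrightarrow> u l = 0}"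

definition mats :: "nat \<Rightarrow> nat \<Rightarrow> (nat \<Rightarrow> nat \<Rightarrow> real) set" where
  "mats a b = {M. \<forall>i j. (a \<le> i \<or> b \<le> j) \<longrightarrow> M i j = 0}"

definition matrix_norm :: "nat \<Rightarrow> nat \<Rightarrow> ((nat \<Rightarrow> nat \<Rightarrow> real) \<Rightarrow> real) \<Rightarrow> bool" where
  "matrix_norm a b nm \<longleftrightarrow>
     (\<forall>A\<in>mats a b. 0 \<le> nm A \<and> (nm A = 0 \<longleftrightarrow> A = (\<lambda>i j. 0))) \<and>
     (\<forall>A\<in>mats a b. \<forall>B\<in>mats a b. nm (\<lambda>i j. A i j + B i j) \<le> nm A + nm B) \<and>
     (\<forall>A\<in>mats a b. \<forall>c::real. nm (\<lambda>i j. c * A i j) = \<bar>c\<bar> * nm A)"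

definition relu :: "real \<Rightarrow> real" where
  "relu u = max u 0"

text \<open>T(u) = V^T (1, u^T)^T for V in R^((a+1) x b): row 0 of V is the bias row.\<close>
definition affine :: "nat \<Rightarrow> nat \<Rightarrow> (nat \<Rightarrow> nat \<Rightarrow> real) \<Rightarrow> (nat \<Rightarrow> real) \<Rightarrow> (nat \<Rightarrow> real)" where
  "affine a b V u = (\<lambda>j. if j < b then V 0 j + (\<Sum>l<a. V (Suc l) j * u l) else 0)"

fun net_out :: "(nat \<Rightarrow> nat) \<Rightarrow> (nat \<Rightarrow> nat \<Rightarrow> nat \<Rightarrow> real) \<Rightarrow> nat \<Rightarrow> (nat \<Rightarrow> real) \<Rightarrow> (nat \<Rightarrow> real)" where
  "net_out d V 0 x = x"
| "net_out d V (Suc i) x =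
     affine (d i) (d (Suc i)) (V (Suc i))
       (if i = 0 then x else (\<lambda>l. relu (net_out d V i x l)))"

text \<open>The class N^{k,d}_{gamma_* <= gamma}; d 0 = m_1, d (k+1) = 1, Nm a b is the norm on R^(a x b).\<close>
definition NN_class :: "nat \<Rightarrow> (nat \<Rightarrow> nat) \<Rightarrow> (nat \<Rightarrow> nat \<Rightarrow> (nat \<Rightarrow> nat \<Rightarrow> real) \<Rightarrow> real)
    \<Rightarrow> real \<Rightarrow> ((nat \<Rightarrow> real) \<Rightarrow> real) set" where
  "NN_class k d Nm \<gamma> =
     {(\<lambda>x. net_out d V (Suc k) x 0) | V.
        (\<forall>i\<in>{1..Suc k}. V i \<in> mats (d (i - 1) + 1) (d i)) \<and>
        (\<Prod>i=1..Suc k. Nm (d (i - 1) + 1) (d i) (V i)) \<le> \<gamma>}"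

text \<open>Empirical Rademacher complexity: expectation over the uniform distribution on
  sign vectors in {-1,1}^n, written as the average over all 2^n sign vectors
  (values in the extended reals, as the supremum may be infinite).\<close>
definition rademacher :: "((nat \<Rightarrow> real) \<Rightarrow> real) set \<Rightarrow> nat \<Rightarrow> (nat \<Rightarrow> (nat \<Rightarrow> real)) \<Rightarrow> ereal" where
  "rademacher F n xs =
     (\<Sum>e\<in>({..<n} \<rightarrow>\<^sub>E {-1, 1::real}).
         (SUP f\<in>F. ereal ((1 / real n) * (\<Sum>i<n. e i * f (xs i))))) / ereal (2 ^ n)"

end

theory Submission
  imports Defs
begin

text \<open>Biases are not controlled by the product of the layer norms: a zero first layer makes the
  product vanish, while the bias of the output layer stays free. Hence the class contains every
  constant function, and for the all-ones sign vector the supremum is already infinite.\<close>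

lemma matrix_norm_zero:
  assumes "matrix_norm a b nm"
  shows "nm (\<lambda>i j. 0) = 0"
  using assms unfolding matrix_norm_def mats_def by auto

lemma constant_in_NN_class:
  fixes c :: real
  assumes "k \<ge> 1" and "0 < d 1" and "0 < d (Suc k)"
    and "matrix_norm (d 0 + 1) (d 1) (Nm (d 0 + 1) (d 1))"
    and "0 \<le> \<gamma>"
  shows "(\<lambda>x. c) \<in> NN_class k d Nm \<gamma>"
proof -
  define V :: "nat \<Rightarrow> nat \<Rightarrow> nat \<Rightarrow> real"
    where "V i = (if i = Suc k then (\<lambda>a b. if a = 0 \<and> b = 0 then c else 0) else (\<lambda>a b. 0))"
    for i
  have net_output: "(\<lambda>x. net_out d V (Suc k) x 0) = (\<lambda>x. c)"
    using assms(3) by (simp add: V_def affine_def)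
  have layers: "\<forall>i\<in>{1..Suc k}. V i \<in> mats (d (i - 1) + 1) (d i)"
    using assms(3) by (auto simp: V_def mats_def)
  have "Nm (d 0 + 1) (d 1) (V 1) = 0"
    using assms(1) matrix_norm_zero[OF assms(4)] by (simp add: V_def)
  then have product_zero: "(\<Prod>i=1..Suc k. Nm (d (i - 1) + 1) (d i) (V i)) = 0"
    by (intro prod_zero) (auto intro!: bexI[of _ 1])
  from layers assms(5) have "(\<forall>i\<in>{1..Suc k}. V i \<in> mats (d (i - 1) + 1) (d i)) \<and>
      (\<Prod>i=1..Suc k. Nm (d (i - 1) + 1) (d i) (V i)) \<le> \<gamma>"
    by (simp only: product_zero)
  then show ?thesis
    unfolding NN_class_def net_output[symmetric] by blast
qed

lemma rademacher_eq_infinity_if_constants: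
  assumes "n \<ge> 1" and "\<And>c. (\<lambda>x. c) \<in> F"
  shows "rademacher F n xs = \<infinity>"
proof -
  define ones where "ones = restrict (\<lambda>_. 1::real) {..<n}"
  have ones_sign: "ones \<in> {..<n} \<rightarrow>\<^sub>E {-1, 1}"
    by (auto simp: ones_def)
  have "(SUP f\<in>F. ereal ((1 / real n) * (\<Sum>i<n. ones i * f (xs i)))) = \<infinity>"
  proof (rule SUP_PInfty)
    fix m :: nat
    have "(1 / real n) * (\<Sum>i<n. ones i * real m) = real m"
      using assms(1) by (simp add: ones_def)
    then show "\<exists>f\<in>F. ereal (real m) \<le> ereal ((1 / real n) * (\<Sum>i<n. ones i * f (xs i)))"
      using assms(2) by (intro bexI[of _ "\<lambda>x. real m"]) auto
  qed
  then have "(\<Sum>e\<in>{..<n} \<rightarrow>\<^sub>E {-1, 1}.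
      (SUP f\<in>F. ereal ((1 / real n) * (\<Sum>i<n. e i * f (xs i))))) = \<infinity>"
    unfolding sum_Pinfty using ones_sign by (auto intro!: finite_PiE)
  then show ?thesis
    unfolding rademacher_def by simp
qed

theorem claim1:
  fixes k :: nat and d :: "nat \<Rightarrow> nat"
    and Nm :: "nat \<Rightarrow> nat \<Rightarrow> (nat \<Rightarrow> nat \<Rightarrow> real) \<Rightarrow> real"
    and \<gamma> :: real and n :: nat and xs :: "nat \<Rightarrow> (nat \<Rightarrow> real)"
  assumes "k \<ge> 1"
    and "\<forall>i\<le>k. d i > 0"
    and "d (Suc k) = 1"
    and "\<forall>a b. 0 < a \<longrightarrow> 0 < b \<longrightarrow> matrix_norm a b (Nm a b)"
    and "\<gamma> > 0"
    and "n \<ge> 1"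
    and "\<forall>i<n. xs i \<in> vecs (d 0)"
  shows "rademacher (NN_class k d Nm \<gamma>) n xs = \<infinity>"
proof (rule rademacher_eq_infinity_if_constants)
  have "0 < d 1"
    using assms(1,2) by auto
  then show "(\<lambda>x. c) \<in> NN_class k d Nm \<gamma>" for c
    using assms(1,3,4,5) by (intro constant_in_NN_class) auto
qed (use assms(6) in auto)

end
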